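(* Consider Problem (P) (defined in the context) with objective $f_{Pa}$. Then Algorithm 2 (run with $\hat f_P=\hat f_{Pa}$) yields a solution $\mathcal{Y}_a^g$ satisfying $$f_{Pa}(\mathcal{Y}_a^g)\ge\frac{\min\{\gamma_2,1\}}{2}\big(1-e^{-\gamma_1}\big)f_{Pa}(\mathcal{Y}_a^\star)-\Big(\frac{B+c_{\max}}{c_{\min}}+1\Big)\varepsilon,$$ where $\mathcal{Y}_a^\star$ is an optimal solution to Problem (P), $\gamma_1,\gamma_2\ge0$ are the type-1 and type-2 greedy submodularity ratios of $f_{Pa}$, $c_{\min}=\min_{y\in\bar{\mathcal{M}}}c(y)$, $c_{\max}=\max_{y\in\bar{\mathcal{M}}}c(y)$, and $\varepsilon\ge0$ satisfies $|\hat f_{Pa}(\mathcal{Y})-f_{Pa}(\mathcal{Y})|\le\varepsilon/2$ for all $\mathcal{Y}\subseteq\bar{\mathcal{M}}$.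
   Context: Setting: networked SIR model on directed graph $\mathcal{G}=(\mathcal{V},\mathcal{E})$, $\mathcal{V}=[n]$, $\bar{\mathcal{N}}_i=\{j:(j,i)\in\mathcal{E}\}\cup\{i\}$, weights $a_{ij}\ge0$, sampling parameter $h$, dynamics $s_i[k+1]=s_i[k]-hs_i[k]\beta\sum_{j\in\bar{\mathcal{N}}_i}a_{ij}x_j[k]$, $x_i[k+1]=(1-h\delta)x_i[k]+hs_i[k]\beta\sum_{j\in\bar{\mathcal{N}}_i}a_{ij}x_j[k]$, $r_i[k+1]=r_i[k]+h\delta x_i[k]$, known initial condition, $\theta=[\beta\ \delta]^T$ with prior pdf $p(\theta)$; $x_i[k],r_i[k]\in[0,1)$ are viewed as functions of $\theta$. Given integers $1\le t_1\le t_2$ and, for each $i$, integers $N_i^x,N_i^r,\zeta_i,\eta_i\ge1$, and costs $c_{k,i},b_{k,i}>0$, budget $B\ge0$. Ground set $\bar{\mathcal{M}}=\{(\hat x_i[k],l):i\in\mathcal{V},k\in\{t_1,\dots,t_2\},l\in[\zeta_i]\}\cup\{(\hat r_i[k],l):i\in\mathcal{V},k\in\{t_1,\dots,t_2\},l\in[\eta_i]\}$, with $c((\hat x_i[k],l))=c_{k,i}$, $c((\hat r_i[k],l))=b_{k,i}$, $c(\mathcal{Y})=\sum_{y\in\mathcal{Y}}c(y)$. For $y=(\hat x_i[k],l)$, $H_y=\mathbb{E}_\theta\big[\frac{N_i^x}{x_i[k](1-x_i[k])}\frac{\partial x_i[k]}{\partial\theta}(\frac{\partial x_i[k]}{\partial\theta})^T\big]$,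 and for $y=(\hat r_i[k],l)$, $H_y=\mathbb{E}_\theta\big[\frac{N_i^r}{r_i[k](1-r_i[k])}\frac{\partial r_i[k]}{\partial\theta}(\frac{\partial r_i[k]}{\partial\theta})^T\big]$ (integrand taken as $0$ where the state is $0$); $\mathbb{E}_\theta$ is w.r.t. $p(\theta)$; $H_y\succeq0$. $H(\mathcal{Y})=\sum_{y\in\mathcal{Y}}H_y$. $F_p=\mathbb{E}_\theta[\nabla_\theta\ln p(\theta)\nabla_\theta\ln p(\theta)^T]\succ0$. $f_{Pa}(\mathcal{Y})=\mathrm{Tr}(F_p^{-1})-\mathrm{Tr}((F_p+H(\mathcal{Y}))^{-1})$. Problem (P): maximize $f_{Pa}(\mathcal{Y})$ over $\mathcal{Y}\subseteq\bar{\mathcal{M}}$ subject to $c(\mathcal{Y})\le B$. $\hat f_{Pa}$ is any set function with $\hat f_{Pa}(\emptyset)=0$ approximating $f_{Pa}$. Algorithm 2: (1) pick $\mathcal{Y}_1=\{y\}$ with $y\in\arg\max_{y\in\bar{\mathcal{M}}}\hat f_{Pa}(\{y\})$; (2) set $\mathcal{Y}_2=\emptyset$, $\mathcal{C}=\bar{\mathcal{M}}$; (3) while $\mathcal{C}\ne\emptyset$: choose $y^\star\in\arg\max_{y\in\mathcal{C}}\frac{\hat f_{Pa}(\{y\}\cup\mathcal{Y}_2)-\hat f_{Pa}(\mathcal{Y}_2)}{c(y)}$; if $c(y^\star)+c(\mathcal{Y}_2)\le B$ add $y^\star$ to $\mathcal{Y}_2$; remove $y^\star$ from $\mathcal{C}$;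 (4) output whichever of $\mathcal{Y}_1,\mathcal{Y}_2$ has larger $\hat f_{Pa}$ value. For this run, let $\mathcal{Y}_2^j$ be the set of the first $j$ elements added to $\mathcal{Y}_2$ ($\mathcal{Y}_2^0=\emptyset$). The type-1 greedy submodularity ratio $\gamma_1$ is the largest real with $\sum_{y\in\mathcal{A}\setminus\mathcal{Y}_2^j}(f_{Pa}(\{y\}\cup\mathcal{Y}_2^j)-f_{Pa}(\mathcal{Y}_2^j))\ge\gamma_1(f_{Pa}(\mathcal{A}\cup\mathcal{Y}_2^j)-f_{Pa}(\mathcal{Y}_2^j))$ for all $\mathcal{A}\subseteq\bar{\mathcal{M}}$ and $j\in\{0,\dots,|\mathcal{Y}_2|\}$. The type-2 greedy submodularity ratio $\gamma_2$ is the largest real with $f_{Pa}(\mathcal{Y}_1)-f_{Pa}(\emptyset)\ge\gamma_2(f_{Pa}(\{y\}\cup\mathcal{Y}_2^j)-f_{Pa}(\mathcal{Y}_2^j))$ for all $j\in\{0,\dots,|\mathcal{Y}_2|\}$ and all $y\in\bar{\mathcal{M}}\setminus\mathcal{Y}_2^j$ with $c(y)+c(\mathcal{Y}_2^j)>B$. *)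

theory Defs
  imports "HOL-Analysis.Analysis"
begin

definition nbhd :: "(nat \<times> nat) set \<Rightarrow> nat \<Rightarrow> nat set" where
  "nbhd E i = {j. (j, i) \<in> E} \<union> {i}"

text \<open>SIR E a h s0 x0 r0 theta k = (s[k], x[k], r[k]) (as functions of the node),
  for parameter theta = (beta, delta).\<close>
primrec SIR :: "(nat \<times> nat) set \<Rightarrow> (nat \<Rightarrow> nat \<Rightarrow> real) \<Rightarrow> real \<Rightarrow>
    (nat \<Rightarrow> real) \<Rightarrow> (nat \<Rightarrow> real) \<Rightarrow> (nat \<Rightarrow> real) \<Rightarrow> real \<times> real \<Rightarrow> nat \<Rightarrow>
    (nat \<Rightarrow> real) \<times> (nat \<Rightarrow> real) \<times> (nat \<Rightarrow> real)" where
  "SIR E a h s0 x0 r0 \<theta> 0 = (s0, x0, r0)"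
| "SIR E a h s0 x0 r0 \<theta> (Suc k) =
     (let (s, x, r) = SIR E a h s0 x0 r0 \<theta> k;
          \<beta> = fst \<theta>; \<delta> = snd \<theta>;
          inc = (\<lambda>i. h * s i * \<beta> * (\<Sum>j\<in>nbhd E i. a i j * x j))
      in (\<lambda>i. s i - inc i, \<lambda>i. (1 - h * \<delta>) * x i + inc i, \<lambda>i. r i + h * \<delta> * x i))"

definition grad2 :: "(real \<times> real \<Rightarrow> real) \<Rightarrow> real \<times> real \<Rightarrow> real^2" where
  "grad2 g \<theta> = (\<chi> m. if m = 1 then deriv (\<lambda>b. g (b, snd \<theta>)) (fst \<theta>)
                         else deriv (\<lambda>d. g (fst \<theta>, d)) (snd \<theta>))"

definition expect_mat :: "(real \<times> real \<Rightarrow> real) \<Rightarrow> (real \<times> real \<Rightarrow> real^2^2) \<Rightarrow> real^2^2" where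
  "expect_mat p G = (\<chi> u v. integral\<^sup>L lborel (\<lambda>\<theta>. p \<theta> * (G \<theta>) $ u $ v))"

text \<open>Single-measurement Fisher information matrix of a state z (as a function of theta) with N samples;
  the integrand is 0 where the state is 0.\<close>
definition fisher_state :: "(real \<times> real \<Rightarrow> real) \<Rightarrow> real \<Rightarrow> (real \<times> real \<Rightarrow> real) \<Rightarrow> real^2^2" where
  "fisher_state p N z = expect_mat p (\<lambda>\<theta>. \<chi> u v.
      (if z \<theta> = 0 then 0 else N / (z \<theta> * (1 - z \<theta>)) * (grad2 z \<theta>) $ u * (grad2 z \<theta>) $ v))"

definition prior_fisher :: "(real \<times> real \<Rightarrow> real) \<Rightarrow> real^2^2" where
  "prior_fisher p = expect_mat p (\<lambda>\<theta>. \<chi> u v. (grad2 (\<lambda>t. ln (p t)) \<theta>) $ u * (grad2 (\<lambda>t. ln (p t)) \<theta>) $ v)"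

text \<open>MX i k l = (hat x_i[k], l); MR i k l = (hat r_i[k], l).\<close>
datatype meas = MX nat nat nat | MR nat nat nat

definition ground_set :: "nat \<Rightarrow> nat \<Rightarrow> nat \<Rightarrow> (nat \<Rightarrow> nat) \<Rightarrow> (nat \<Rightarrow> nat) \<Rightarrow> meas set" where
  "ground_set n t1 t2 \<zeta> \<eta> =
     {MX i k l | i k l. i \<in> {1..n} \<and> k \<in> {t1..t2} \<and> l \<in> {1..\<zeta> i}} \<union>
     {MR i k l | i k l. i \<in> {1..n} \<and> k \<in> {t1..t2} \<and> l \<in> {1..\<eta> i}}"

definition meas_cost :: "(nat \<Rightarrow> nat \<Rightarrow> real) \<Rightarrow> (nat \<Rightarrow> nat \<Rightarrow> real) \<Rightarrow> meas \<Rightarrow> real" where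
  "meas_cost c b y = (case y of MX i k l \<Rightarrow> c k i | MR i k l \<Rightarrow> b k i)"

definition meas_H :: "(nat \<times> nat) set \<Rightarrow> (nat \<Rightarrow> nat \<Rightarrow> real) \<Rightarrow> real \<Rightarrow>
    (nat \<Rightarrow> real) \<Rightarrow> (nat \<Rightarrow> real) \<Rightarrow> (nat \<Rightarrow> real) \<Rightarrow> (real \<times> real \<Rightarrow> real) \<Rightarrow>
    (nat \<Rightarrow> nat) \<Rightarrow> (nat \<Rightarrow> nat) \<Rightarrow> meas \<Rightarrow> real^2^2" where
  "meas_H E a h s0 x0 r0 p Nx Nr y = (case y of
      MX i k l \<Rightarrow> fisher_state p (real (Nx i)) (\<lambda>\<theta>. fst (snd (SIR E a h s0 x0 r0 \<theta> k)) i)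
    | MR i k l \<Rightarrow> fisher_state p (real (Nr i)) (\<lambda>\<theta>. snd (snd (SIR E a h s0 x0 r0 \<theta> k)) i))"

definition f_Pa :: "real^2^2 \<Rightarrow> (meas \<Rightarrow> real^2^2) \<Rightarrow> meas set \<Rightarrow> real" where
  "f_Pa Fp H Y = trace (matrix_inv Fp) - trace (matrix_inv (Fp + (\<Sum>y\<in>Y. H y)))"

definition psd2 :: "real^2^2 \<Rightarrow> bool" where
  "psd2 M \<longleftrightarrow> transpose M = M \<and> (\<forall>v. 0 \<le> v \<bullet> (M *v v))"

definition pd2 :: "real^2^2 \<Rightarrow> bool" where
  "pd2 M \<longleftrightarrow> transpose M = M \<and> (\<forall>v. v \<noteq> 0 \<longrightarrow> 0 < v \<bullet> (M *v v))"

definition greedy_step :: "('a \<Rightarrow> real) \<Rightarrow> real \<Rightarrow> 'a list \<Rightarrow> 'a \<Rightarrow> 'a list" where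
  "greedy_step c B L y = (if c y + (\<Sum>z\<in>set L. c z) \<le> B then L @ [y] else L)"

definition greedy_added :: "('a \<Rightarrow> real) \<Rightarrow> real \<Rightarrow> 'a list \<Rightarrow> 'a list" where
  "greedy_added c B ys = foldl (greedy_step c B) [] ys"

text \<open>ys is a valid run of the while-loop of Algorithm 2: ys lists the order in which the candidates
  y* are picked (and removed from C); each pick maximizes the marginal-gain/cost ratio over the
  remaining candidates, with respect to the current Y_2.\<close>
definition greedy_run :: "('a set \<Rightarrow> real) \<Rightarrow> ('a \<Rightarrow> real) \<Rightarrow> real \<Rightarrow> 'a set \<Rightarrow> 'a list \<Rightarrow> bool" where
  "greedy_run fh c B M ys \<longleftrightarrow> distinct ys \<and> set ys = M \<and>
     (\<forall>t < length ys.
        let Y = set (greedy_added c B (take t ys)) in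
        \<forall>y \<in> M - set (take t ys).
          (fh (insert y Y) - fh Y) / c y \<le> (fh (insert (ys ! t) Y) - fh Y) / c (ys ! t))"

definition alg2_output :: "('a set \<Rightarrow> real) \<Rightarrow> ('a \<Rightarrow> real) \<Rightarrow> real \<Rightarrow> 'a set \<Rightarrow> 'a set \<Rightarrow> 'a set \<Rightarrow> 'a list \<Rightarrow> bool" where
  "alg2_output fh c B M Y Y1 ys \<longleftrightarrow>
     (\<exists>y1 \<in> M. Y1 = {y1} \<and> (\<forall>y \<in> M. fh {y} \<le> fh {y1})) \<and>
     greedy_run fh c B M ys \<and>
     (let Y2 = set (greedy_added c B ys) in
        Y \<in> {Y1, Y2} \<and> fh Y1 \<le> fh Y \<and> fh Y2 \<le> fh Y)"

definition gamma1_ineq :: "('a set \<Rightarrow> real) \<Rightarrow> 'a set \<Rightarrow> 'a list \<Rightarrow> real \<Rightarrow> bool" where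
  "gamma1_ineq f M L \<gamma> \<longleftrightarrow> (\<forall>A \<subseteq> M. \<forall>j \<le> length L.
      let Yj = set (take j L) in
      (\<Sum>y \<in> A - Yj. f (insert y Yj) - f Yj) \<ge> \<gamma> * (f (A \<union> Yj) - f Yj))"

definition is_gamma1 :: "('a set \<Rightarrow> real) \<Rightarrow> 'a set \<Rightarrow> 'a list \<Rightarrow> real \<Rightarrow> bool" where
  "is_gamma1 f M L \<gamma> \<longleftrightarrow> gamma1_ineq f M L \<gamma> \<and> (\<forall>\<gamma>'. gamma1_ineq f M L \<gamma>' \<longrightarrow> \<gamma>' \<le> \<gamma>)"

definition gamma2_ineq :: "('a set \<Rightarrow> real) \<Rightarrow> ('a \<Rightarrow> real) \<Rightarrow> real \<Rightarrow> 'a set \<Rightarrow> 'a set \<Rightarrow> 'a list \<Rightarrow> real \<Rightarrow> bool" where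
  "gamma2_ineq f c B M Y1 L \<gamma> \<longleftrightarrow> (\<forall>j \<le> length L.
      let Yj = set (take j L) in
      \<forall>y \<in> M - Yj. c y + (\<Sum>z\<in>Yj. c z) > B \<longrightarrow>
        f Y1 - f {} \<ge> \<gamma> * (f (insert y Yj) - f Yj))"

definition is_gamma2 :: "('a set \<Rightarrow> real) \<Rightarrow> ('a \<Rightarrow> real) \<Rightarrow> real \<Rightarrow> 'a set \<Rightarrow> 'a set \<Rightarrow> 'a list \<Rightarrow> real \<Rightarrow> bool" where
  "is_gamma2 f c B M Y1 L \<gamma> \<longleftrightarrow> gamma2_ineq f c B M Y1 L \<gamma> \<and>
     (\<forall>\<gamma>'. gamma2_ineq f c B M Y1 L \<gamma>' \<longrightarrow> \<gamma>' \<le> \<gamma>)"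

end

theory Submission
  imports Defs "HOL-Library.Sublist"
begin

(* The objective is monotone: for positive definite A and positive semidefinite D (2 x 2),
   trace ((A + D)^-1) <= trace (A^-1); with trace (A^-1) = trace A / det A this is a polynomial
   inequality whose defect is a sum of three nonnegative terms.

   Given monotonicity, the guarantee is the analysis of the cost-benefit greedy algorithm, run with
   a surrogate whose marginal gains are within eps of the true ones. Until the first time an
   element u of the optimal set is rejected for lack of budget, every unselected optimal element is
   still a candidate, so the greedy choice g and the type-1 ratio give
     gamma1 (f Y* - f S) <= B / c g * (gain of g + eps) + B / c_min * eps,
   whence f Y* - f S <= exp (- gamma1 c(S) / B) f Y* + eps (|S| + c(S) / c_min) for the selected
   set S. Adding u overshoots the budget, so f (S + u) >= (1 - exp (- gamma1)) f Y* - 2 K eps with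
   K = (B + c_max) / c_min. The type-2 ratio bounds gamma2 (f (S + u) - f S) by f Y1, and
   f S <= f Y2, so min gamma2 1 * f (S + u) <= 2 max (f Y1) (f Y2), of which the output loses at
   most eps. If no optimal element is ever rejected, the optimal set lies inside Y2. *)

lemma transpose_eq_self_nth: "transpose A = A \<Longrightarrow> A $ i $ j = A $ j $ i"
  by (metis transpose_def vec_lambda_beta)

lemma inner_mult_vector_2:
  fixes A :: "real^2^2"
  shows "vector [x, y] \<bullet> (A *v vector [x, y]) = A$1$1*x*x + (A$1$2 + A$2$1)*x*y + A$2$2*y*y"
  by (simp add: inner_vec_def sum_2 matrix_vector_mult_def algebra_simps)

lemma psd2_quadratic_form:
  assumes "psd2 A"
  shows "0 \<le> A$1$1*x*x + 2*A$1$2*x*y + A$2$2*y*y"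
proof -
  have "A$2$1 = A$1$2" using assms transpose_eq_self_nth unfolding psd2_def by blast
  then show ?thesis
    using assms inner_mult_vector_2[of x y A] unfolding psd2_def mult_2 by metis
qed

lemma pd2_quadratic_form:
  assumes "pd2 A" and "x \<noteq> 0 \<or> y \<noteq> 0"
  shows "0 < A$1$1*x*x + 2*A$1$2*x*y + A$2$2*y*y"
proof -
  have "A$2$1 = A$1$2" using assms transpose_eq_self_nth unfolding pd2_def by blast
  moreover have "vector [x, y] \<noteq> (0 :: real^2)"
    using assms(2) by (auto simp: vec_eq_iff forall_2)
  ultimately show ?thesis
    using assms(1) inner_mult_vector_2[of x y A] unfolding pd2_def mult_2 by metis
qed

lemma det_symmetric_2:
  fixes A :: "real^2^2"
  shows "transpose A = A \<Longrightarrow> det A = A$1$1 * A$2$2 - A$1$2 * A$1$2"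
  using transpose_eq_self_nth[of A 1 2] by (simp add: det_2)

lemma pd2_entries:
  assumes "pd2 A"
  shows "0 < A$1$1" "0 < A$2$2" "0 < det A"
proof -
  show "0 < A$1$1" using pd2_quadratic_form[OF assms, of 1 0] by simp
  show pos: "0 < A$2$2" using pd2_quadratic_form[OF assms, of 0 1] by simp
  have "0 < A$2$2 * (A$1$1 * A$2$2 - A$1$2 * A$1$2)"
    using pd2_quadratic_form[OF assms, of "A$2$2" "- A$1$2"] pos by (simp add: algebra_simps)
  then show "0 < det A"
    using assms pos det_symmetric_2 unfolding pd2_def by (simp add: zero_less_mult_iff)
qed

lemma psd2_det_nonneg:
  assumes "psd2 D"
  shows "0 \<le> D$1$1 * D$2$2 - D$1$2 * D$1$2"
proof -
  define p q r where "p = D$1$1" and "q = D$1$2" and "r = D$2$2"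
  have form: "0 \<le> p*x*x + 2*q*x*y + r*y*y" for x y
    using psd2_quadratic_form[OF assms] unfolding p_def q_def r_def .
  have p: "0 \<le> p" and r: "0 \<le> r"
    using form[of 1 0] form[of 0 1] by simp_all
  show ?thesis
  proof (cases "p = 0")
    case True
    have "0 \<le> - (q*q) * (r+2)"
      using form[of "r+1" "-q"] True by (simp add: algebra_simps)
    then show ?thesis using True r unfolding p_def q_def r_def by (simp add: mult_le_0_iff)
  next
    case False
    have "0 \<le> p * (p*r - q*q)"
      using form[of "-q" p] by (simp add: algebra_simps)
    then show ?thesis using False p unfolding p_def q_def r_def by (simp add: zero_le_mult_iff)
  qed
qed

lemma pd2_add_psd2: "pd2 A \<Longrightarrow> psd2 D \<Longrightarrow> pd2 (A + D)"
  unfolding pd2_def psd2_def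
  by (auto simp: transpose_def vec_eq_iff matrix_vector_mult_add_rdistrib inner_add_right add_pos_nonneg)

lemma psd2_sum: "(\<And>y. y \<in> Y \<Longrightarrow> psd2 (H y)) \<Longrightarrow> psd2 (\<Sum>y\<in>Y. H y)"
proof (induction Y rule: infinite_finite_induct)
  case (insert x F)
  then show ?case
    unfolding psd2_def
    by (auto simp: transpose_def vec_eq_iff matrix_vector_mult_add_rdistrib inner_add_right)
qed (simp_all add: psd2_def transpose_def vec_eq_iff)

lemma matrix_inv_eqI:
  fixes A :: "'a::semiring_1^'n^'n"
  assumes "A ** X = mat 1" and "X ** A = mat 1"
  shows "matrix_inv A = X"
proof -
  have "A ** matrix_inv A = mat 1 \<and> matrix_inv A ** A = mat 1"
    unfolding matrix_inv_def by (rule someI[of _ X]) (use assms in blast)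
  then show ?thesis
    by (metis assms(2) matrix_mul_assoc matrix_mul_lid matrix_mul_rid)
qed

lemma trace_matrix_inv_2:
  fixes A :: "real^2^2"
  assumes "det A \<noteq> 0"
  shows "trace (matrix_inv A) = (A$1$1 + A$2$2) / det A"
proof -
  define X :: "real^2^2" where "X = (\<chi> i j.
     if i = 1 \<and> j = 1 then A$2$2 / det A else if i = 1 \<and> j = 2 then - A$1$2 / det A
     else if i = 2 \<and> j = 1 then - A$2$1 / det A else A$1$1 / det A)"
  have det: "det A = A$1$1 * A$2$2 - A$1$2 * A$2$1" by (rule det_2)
  have "A ** X = mat 1" and "X ** A = mat 1"
    using assms
    by (simp_all add: vec_eq_iff forall_2 matrix_matrix_mult_def sum_2 X_def mat_def
        diff_divide_distrib[symmetric] add_divide_distrib[symmetric])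
       (simp_all add: det algebra_simps)
  then have "matrix_inv A = X" by (rule matrix_inv_eqI)
  then show ?thesis by (simp add: trace_def sum_2 X_def add_divide_distrib)
qed

lemma trace_matrix_inv_add_psd2_le:
  fixes A D :: "real^2^2"
  assumes A: "pd2 A" and D: "psd2 D"
  shows "trace (matrix_inv (A + D)) \<le> trace (matrix_inv A)"
proof -
  have AD: "pd2 (A + D)" using A D by (rule pd2_add_psd2)
  define a b d p q r
    where "a = A$1$1" and "b = A$1$2" and "d = A$2$2" and "p = D$1$1" and "q = D$1$2" and "r = D$2$2"
  have det_A: "det A = a*d - b*b"
    using A det_symmetric_2 unfolding pd2_def a_def b_def d_def by blast
  have det_AD: "det (A + D) = (a+p)*(d+r) - (b+q)*(b+q)"
    using AD det_symmetric_2 unfolding pd2_def a_def b_def d_def p_def q_def r_def by force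
  have "0 < a" "0 < d" "0 < a*d - b*b" "0 < (a+p)*(d+r) - (b+q)*(b+q)"
    using pd2_entries[OF A] pd2_entries[OF AD] det_A det_AD unfolding a_def d_def by simp_all
  note pos = this
  have "0 \<le> p*r - q*q" using psd2_det_nonneg[OF D] unfolding p_def q_def r_def .
  then have "0 \<le> (a+d)*(p*r - q*q)" using pos by simp
  moreover have "0 \<le> p*b*b + 2*q*b*(-a) + r*(-a)*(-a)"
    using psd2_quadratic_form[OF D, of b "-a"] unfolding p_def q_def r_def .
  moreover have "0 \<le> p*d*d + 2*q*d*(-b) + r*(-b)*(-b)"
    using psd2_quadratic_form[OF D, of d "-b"] unfolding p_def q_def r_def .
  moreover have "(a+d)*((a+p)*(d+r) - (b+q)*(b+q)) - (a+d+p+r)*(a*d - b*b)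
      = (a+d)*(p*r - q*q) + (p*b*b + 2*q*b*(-a) + r*(-a)*(-a)) + (p*d*d + 2*q*d*(-b) + r*(-b)*(-b))"
    by (simp add: algebra_simps)
  ultimately have cross: "(a+d+p+r)*(a*d - b*b) \<le> (a+d)*((a+p)*(d+r) - (b+q)*(b+q))"
    by linarith
  have "trace (matrix_inv (A + D)) = (a+d+p+r) / ((a+p)*(d+r) - (b+q)*(b+q))"
    using trace_matrix_inv_2[of "A + D"] pos det_AD by (simp add: a_def d_def p_def r_def algebra_simps)
  also have "\<dots> \<le> (a+d) / (a*d - b*b)"
    using cross pos by (simp add: divide_simps)
  also have "\<dots> = trace (matrix_inv A)"
    using trace_matrix_inv_2[of A] pos det_A by (simp add: a_def d_def)
  finally show ?thesis .
qed

lemma f_Pa_empty [simp]: "f_Pa Fp H {} = 0"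
  by (simp add: f_Pa_def)

lemma f_Pa_mono:
  assumes Fp: "pd2 Fp" and H: "\<And>y. y \<in> T \<Longrightarrow> psd2 (H y)" and "S \<subseteq> T" "finite T"
  shows "f_Pa Fp H S \<le> f_Pa Fp H T"
proof -
  have split: "Fp + sum H T = (Fp + sum H S) + sum H (T - S)"
    using sum.subset_diff[OF assms(3,4)] by (simp add: algebra_simps)
  have "pd2 (Fp + sum H S)"
    using H assms(3) by (intro pd2_add_psd2[OF Fp] psd2_sum) blast
  moreover have "psd2 (sum H (T - S))"
    using H by (intro psd2_sum) blast
  ultimately show ?thesis
    unfolding f_Pa_def split by (simp add: trace_matrix_inv_add_psd2_le)
qed

lemma greedy_added_snoc:
  "greedy_added c B (xs @ [x]) = greedy_step c B (greedy_added c B xs) x"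
  by (simp add: greedy_added_def)

lemma prefix_greedy_added_append: "prefix (greedy_added c B xs) (greedy_added c B (xs @ zs))"
proof (induction zs rule: rev_induct)
  case (snoc z zs)
  then show ?case
    using greedy_added_snoc[of c B "xs @ zs" z] by (auto simp: greedy_step_def)
qed simp

lemma set_greedy_added_subset: "set (greedy_added c B xs) \<subseteq> set xs"
  by (induction xs rule: rev_induct) (auto simp: greedy_added_def greedy_step_def)

lemma sum_greedy_added_le:
  assumes "0 \<le> B"
  shows "sum c (set (greedy_added c B xs)) \<le> B"
proof (induction xs rule: rev_induct)
  case (snoc x xs)
  then show ?case
    by (cases "x \<in> set (greedy_added c B xs)")
       (auto simp: greedy_added_snoc greedy_step_def insert_absorb)
qed (simp add: greedy_added_def assms)

lemma exp_recurrence_step: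
  fixes D P E e g \<Delta> :: real
  assumes "D \<le> P + E" and "g * D \<le> \<Delta> + e"
    and "0 \<le> g" "0 \<le> \<Delta>" "0 \<le> P" "0 \<le> E" "0 \<le> e"
  shows "D - \<Delta> \<le> exp (- g) * P + E + e"
proof -
  have exp_pos: "0 \<le> exp (- g) * P" using assms(5) by simp
  consider "D < 0" | "g > 1" | "0 \<le> D" "g \<le> 1" by linarith
  then show ?thesis
  proof cases
    case 1
    then show ?thesis using assms exp_pos by linarith
  next
    case 2
    then have "D \<le> g * D" if "0 \<le> D" using that by (simp add: mult_le_cancel_right1)
    then show ?thesis using assms exp_pos by (cases "0 \<le> D") linarith+
  next
    case 3
    have "(1 - g) * D \<le> (1 - g) * P + (1 - g) * E"
      using 3 assms(1) mult_left_mono[OF assms(1), of "1 - g"] by (simp add: distrib_left)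
    also have "\<dots> \<le> exp (- g) * P + E"
    proof (rule add_mono)
      show "(1 - g) * P \<le> exp (- g) * P"
        using exp_ge_add_one_self[of "- g"] assms(5) by (intro mult_right_mono) auto
      show "(1 - g) * E \<le> E" using assms(3,6) 3 by (simp add: mult_left_le_one_le)
    qed
    finally show ?thesis using assms(2) by (simp add: algebra_simps)
  qed
qed

lemma min_one_mult_le_twice_max:
  fixes g u v y1 y2 :: real
  assumes "g * (v - u) \<le> y1" and "u \<le> y2" and "u \<le> v"
    and "0 \<le> g" "0 \<le> y1"
  shows "min g 1 * v \<le> 2 * max y1 y2"
proof (cases "1 \<le> g")
  case True
  then have "v - u \<le> g * (v - u)" using assms(3) by (simp add: mult_le_cancel_right1)
  then show ?thesis using True assms by simp
next
  case False
  have "g * v \<le> y1 + g * y2" using assms(1,2,4) mult_left_mono[OF assms(2,4)] by (simp add: algebra_simps)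
  also have "\<dots> \<le> max y1 y2 + g * max y1 y2" using assms(4) by (intro add_mono mult_left_mono) auto
  also have "\<dots> \<le> 2 * max y1 y2" using False assms(5) mult_right_mono[of g 1 "max y1 y2"] by simp
  finally show ?thesis using False by simp
qed

locale alg2_run =
  fixes f fh :: "'a set \<Rightarrow> real" and c :: "'a \<Rightarrow> real" and B \<epsilon> :: real
    and M Yg Y1 :: "'a set" and ys :: "'a list"
  assumes cost_pos: "\<And>y. y \<in> M \<Longrightarrow> 0 < c y"
    and mono: "\<And>S T. S \<subseteq> T \<Longrightarrow> T \<subseteq> M \<Longrightarrow> f S \<le> f T"
    and f_empty: "f {} = 0"
    and budget_nonneg: "0 \<le> B"
    and eps_nonneg: "0 \<le> \<epsilon>"
    and approx: "\<And>Y. Y \<subseteq> M \<Longrightarrow> \<bar>fh Y - f Y\<bar> \<le> \<epsilon> / 2"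
    and run: "alg2_output fh c B M Yg Y1 ys"
begin

abbreviation added :: "'a list" where
  "added \<equiv> greedy_added c B ys"

definition selected :: "nat \<Rightarrow> 'a set" where
  "selected t = set (greedy_added c B (take t ys))"

lemma greedy_run: "greedy_run fh c B M ys"
  using run unfolding alg2_output_def by blast

lemma set_ys: "set ys = M" and distinct_ys: "distinct ys"
  using greedy_run unfolding greedy_run_def by auto

lemma finite_M: "finite M"
  using set_ys by (metis List.finite_set)

lemma Y1_subset: "Y1 \<subseteq> M" and M_nonempty: "M \<noteq> {}"
  using run unfolding alg2_output_def by auto

lemma added_subset: "set added \<subseteq> M"
  using set_greedy_added_subset[of c B ys] set_ys by simp

lemma f_nonneg: "Y \<subseteq> M \<Longrightarrow> 0 \<le> f Y"
  using mono[of "{}" Y] f_empty by simp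

lemma f_diff_le_fh_diff: "Y \<subseteq> M \<Longrightarrow> Z \<subseteq> M \<Longrightarrow> f Y - f Z \<le> fh Y - fh Z + \<epsilon>"
  using approx[of Y] approx[of Z] unfolding abs_le_iff by linarith

lemma fh_diff_le_f_diff: "Y \<subseteq> M \<Longrightarrow> Z \<subseteq> M \<Longrightarrow> fh Y - fh Z \<le> f Y - f Z + \<epsilon>"
  using approx[of Y] approx[of Z] unfolding abs_le_iff by linarith

lemma output_value: "f Y1 - \<epsilon> \<le> f Yg" "f (set added) - \<epsilon> \<le> f Yg"
proof -
  have "Yg \<in> {Y1, set added}" "fh Y1 \<le> fh Yg" "fh (set added) \<le> fh Yg"
    using run unfolding alg2_output_def Let_def by auto
  moreover from this have "Yg \<subseteq> M" using Y1_subset added_subset by auto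
  ultimately show "f Y1 - \<epsilon> \<le> f Yg" "f (set added) - \<epsilon> \<le> f Yg"
    using f_diff_le_fh_diff[of Y1 Yg] f_diff_le_fh_diff[of "set added" Yg] Y1_subset added_subset
    by auto
qed

lemma greedy_pick:
  assumes "t < length ys" and "y \<in> M - set (take t ys)"
  shows "(fh (insert y (selected t)) - fh (selected t)) / c y
    \<le> (fh (insert (ys ! t) (selected t)) - fh (selected t)) / c (ys ! t)"
  using greedy_run assms unfolding greedy_run_def selected_def Let_def by blast

lemma selected_0: "selected 0 = {}"
  by (simp add: selected_def greedy_added_def)

lemma selected_Suc:
  "t < length ys \<Longrightarrow> selected (Suc t) =
    (if c (ys ! t) + sum c (selected t) \<le> B then insert (ys ! t) (selected t) else selected t)"
  by (simp add: selected_def take_Suc_conv_app_nth greedy_added_snoc greedy_step_def)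

lemma selected_subset_take: "selected t \<subseteq> set (take t ys)"
  unfolding selected_def by (rule set_greedy_added_subset)

lemma selected_subset: "selected t \<subseteq> M"
  using selected_subset_take[of t] set_take_subset[of t ys] set_ys by simp

lemma nth_notin_selected: "t < length ys \<Longrightarrow> ys ! t \<notin> selected t"
  using selected_subset_take distinct_ys
  by (metis distinct_take distinct_append take_Suc_conv_app_nth disjoint_iff list.set_intros(1) subsetD)

lemma selected_mono: "s \<le> t \<Longrightarrow> selected s \<subseteq> selected t"
  using prefix_greedy_added_append[of c B "take s ys" "take (t - s) (drop s ys)"]
  by (simp add: selected_def set_mono_prefix flip: take_add)

lemma selected_eq_take_added: "\<exists>j \<le> length added. selected t = set (take j added)"
proof -
  obtain R where "added = greedy_added c B (take t ys) @ R"
    using prefix_greedy_added_append[of c B "take t ys" "drop t ys"] by (auto elim: prefixE)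
  then show ?thesis
    by (intro exI[of _ "length (greedy_added c B (take t ys))"]) (simp add: selected_def)
qed

lemma selected_subset_added: "selected t \<subseteq> set added"
  using selected_eq_take_added[of t] set_take_subset by metis

lemma sum_selected_le: "sum c (selected t) \<le> B"
  unfolding selected_def using budget_nonneg by (rule sum_greedy_added_le)

end

locale alg2_analysis = alg2_run +
  fixes Ystar :: "'a set" and \<gamma>1 \<gamma>2 :: real
  assumes opt_subset: "Ystar \<subseteq> M" and opt_cost: "sum c Ystar \<le> B"
    and gamma1: "gamma1_ineq f M (greedy_added c B ys) \<gamma>1"
    and gamma2: "gamma2_ineq f c B M Y1 (greedy_added c B ys) \<gamma>2"
    and gamma1_nonneg: "0 \<le> \<gamma>1" and gamma2_nonneg: "0 \<le> \<gamma>2"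
begin

abbreviation cmin :: real where
  "cmin \<equiv> Min (c ` M)"

abbreviation cmax :: real where
  "cmax \<equiv> Max (c ` M)"

lemma cmin_le: "y \<in> M \<Longrightarrow> cmin \<le> c y"
  using finite_M by simp

lemma cmax_ge: "y \<in> M \<Longrightarrow> c y \<le> cmax"
  using finite_M by simp

lemma cmin_pos: "0 < cmin"
  using finite_M M_nonempty cost_pos by simp

lemma card_le_cost_div_cmin:
  assumes "Y \<subseteq> M"
  shows "real (card Y) \<le> sum c Y / cmin"
proof -
  have "real (card Y) * cmin \<le> sum c Y"
    using assms cmin_le by (intro sum_bounded_below) auto
  then show ?thesis using cmin_pos by (simp add: divide_simps)
qed

lemma gamma1_selected:
  "\<gamma>1 * (f (Ystar \<union> selected t) - f (selected t))
    \<le> (\<Sum>y\<in>Ystar - selected t. f (insert y (selected t)) - f (selected t))"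
proof -
  obtain j where "j \<le> length added" "selected t = set (take j added)"
    using selected_eq_take_added by blast
  then show ?thesis
    using gamma1 opt_subset unfolding gamma1_ineq_def Let_def by auto
qed

lemma gamma2_selected:
  assumes "y \<in> M - selected t" and "B < c y + sum c (selected t)"
  shows "\<gamma>2 * (f (insert y (selected t)) - f (selected t)) \<le> f Y1"
proof -
  obtain j where "j \<le> length added" "selected t = set (take j added)"
    using selected_eq_take_added by blast
  then show ?thesis
    using gamma2 assms f_empty unfolding gamma2_ineq_def Let_def by auto
qed

lemma greedy_gain_bound:
  assumes t: "t < length ys" and cand: "Ystar - selected t \<subseteq> M - set (take t ys)"
  defines "S \<equiv> selected t" and "g \<equiv> ys ! t"
  shows "\<gamma>1 * (f Ystar - f S) \<le> B / c g * (f (insert g S) - f S + \<epsilon>) + B / cmin * \<epsilon>"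
proof -
  define \<Delta> where "\<Delta> = f (insert g S) - f S"
  have gM: "g \<in> M" and SM: "S \<subseteq> M"
    using t set_ys selected_subset unfolding g_def S_def by auto
  have cg: "0 < c g" using cost_pos gM .
  have "f S \<le> f (insert g S)" using SM gM by (intro mono) auto
  then have "0 \<le> \<Delta>" unfolding \<Delta>_def by simp
  have gain: "f (insert y S) - f S \<le> c y * ((\<Delta> + \<epsilon>) / c g) + \<epsilon>" if y: "y \<in> Ystar - S" for y
  proof -
    have yM: "y \<in> M" and cy: "0 < c y" using y opt_subset cost_pos by auto
    have "(fh (insert y S) - fh S) / c y \<le> (fh (insert g S) - fh S) / c g"
      using greedy_pick[OF t] cand y unfolding S_def g_def by blast
    also have "\<dots> \<le> (\<Delta> + \<epsilon>) / c g"
      using fh_diff_le_f_diff[of "insert g S" S] SM gM cg unfolding \<Delta>_def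
      by (intro divide_right_mono) auto
    finally have "fh (insert y S) - fh S \<le> c y * ((\<Delta> + \<epsilon>) / c g)"
      using cy by (metis pos_divide_le_eq mult.commute)
    then show ?thesis using f_diff_le_fh_diff[of "insert y S" S] SM yM by auto
  qed
  have "\<gamma>1 * (f Ystar - f S) \<le> \<gamma>1 * (f (Ystar \<union> S) - f S)"
    using mono[of Ystar "Ystar \<union> S"] opt_subset SM gamma1_nonneg by (intro mult_left_mono) auto
  also have "\<dots> \<le> (\<Sum>y\<in>Ystar - S. f (insert y S) - f S)"
    unfolding S_def by (rule gamma1_selected)
  also have "\<dots> \<le> (\<Sum>y\<in>Ystar - S. c y * ((\<Delta> + \<epsilon>) / c g) + \<epsilon>)"
    using gain by (rule sum_mono)
  also have "\<dots> = sum c (Ystar - S) * ((\<Delta> + \<epsilon>) / c g) + card (Ystar - S) * \<epsilon>"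
    by (simp add: sum.distrib sum_distrib_right del: times_divide_eq_right)
  also have "\<dots> \<le> B * ((\<Delta> + \<epsilon>) / c g) + B / cmin * \<epsilon>"
  proof (rule add_mono)
    have "sum c (Ystar - S) \<le> sum c Ystar"
      using finite_subset[OF opt_subset finite_M] opt_subset cost_pos
      by (intro sum_mono2) (auto intro: less_imp_le)
    then have "sum c (Ystar - S) \<le> B" using opt_cost by linarith
    then show "sum c (Ystar - S) * ((\<Delta> + \<epsilon>) / c g) \<le> B * ((\<Delta> + \<epsilon>) / c g)"
      using \<open>0 \<le> \<Delta>\<close> eps_nonneg cg by (intro mult_right_mono) auto
    have "real (card (Ystar - S)) \<le> sum c (Ystar - S) / cmin"
      using opt_subset by (intro card_le_cost_div_cmin) auto
    also have "\<dots> \<le> B / cmin"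
      using \<open>sum c (Ystar - S) \<le> B\<close> cmin_pos by (intro divide_right_mono) auto
    finally have "real (card (Ystar - S)) \<le> B / cmin" .
    then show "card (Ystar - S) * \<epsilon> \<le> B / cmin * \<epsilon>"
      using eps_nonneg by (intro mult_right_mono)
  qed
  finally show ?thesis unfolding \<Delta>_def by (simp add: mult.commute)
qed

definition gap_invariant :: "'a set \<Rightarrow> bool" where
  "gap_invariant S \<longleftrightarrow>
    f Ystar - f S \<le> exp (- \<gamma>1 * sum c S / B) * f Ystar + \<epsilon> * (card S + sum c S / cmin)"

lemma gap_invariant_step:
  assumes t: "t < length ys" and cand: "Ystar - selected t \<subseteq> M - set (take t ys)"
    and B: "0 < B" and inv: "gap_invariant (selected t)"
  shows "gap_invariant (insert (ys ! t) (selected t))"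
proof -
  define S g x where "S = selected t" and "g = ys ! t" and "x = c g / B"
  have gM: "g \<in> M" and SM: "S \<subseteq> M" and gS: "g \<notin> S"
    using t set_ys selected_subset nth_notin_selected unfolding g_def S_def by auto
  have cg: "0 < c g" using cost_pos gM .
  have fin: "finite S" using finite_subset[OF SM finite_M] .
  have F: "0 \<le> f Ystar" using f_nonneg opt_subset .
  have x: "0 \<le> x" using cg B unfolding x_def by simp
  have cS: "0 \<le> sum c S" using SM cost_pos by (intro sum_nonneg) (auto intro: less_imp_le)
  have "f S \<le> f (insert g S)" using SM gM by (intro mono) auto
  have "\<gamma>1 * x * (f Ystar - f S) = x * (\<gamma>1 * (f Ystar - f S))" by simp
  also have "\<dots> \<le> x * (B / c g * (f (insert g S) - f S + \<epsilon>) + B / cmin * \<epsilon>)"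
    using greedy_gain_bound[OF t cand] cg B unfolding S_def g_def x_def
    by (intro mult_left_mono) auto
  also have "\<dots> = f (insert g S) - f S + (\<epsilon> + c g / cmin * \<epsilon>)"
    using cg B cmin_pos unfolding x_def by (simp add: field_simps)
  finally have rec: "f Ystar - f S - (f (insert g S) - f S)
      \<le> exp (- (\<gamma>1 * x)) * (exp (- \<gamma>1 * sum c S / B) * f Ystar)
        + \<epsilon> * (card S + sum c S / cmin) + (\<epsilon> + c g / cmin * \<epsilon>)"
    using inv \<open>f S \<le> f (insert g S)\<close> gamma1_nonneg x cS cg F eps_nonneg cmin_pos
    unfolding gap_invariant_def S_def by (intro exp_recurrence_step) auto
  have "- (\<gamma>1 * x) + - \<gamma>1 * sum c S / B = - \<gamma>1 * sum c (insert g S) / B"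
    using fin gS B unfolding x_def by (simp add: field_simps)
  then have exp_eq: "exp (- (\<gamma>1 * x)) * (exp (- \<gamma>1 * sum c S / B) * f Ystar)
      = exp (- \<gamma>1 * sum c (insert g S) / B) * f Ystar"
    by (metis exp_add mult.assoc)
  have err_eq: "\<epsilon> * (card S + sum c S / cmin) + (\<epsilon> + c g / cmin * \<epsilon>)
      = \<epsilon> * (card (insert g S) + sum c (insert g S) / cmin)"
    using fin gS by (simp add: algebra_simps add_divide_distrib)
  show ?thesis
    using rec unfolding gap_invariant_def S_def[symmetric] g_def[symmetric] add.assoc exp_eq err_eq
    by simp
qed

definition rejected :: "nat \<Rightarrow> bool" where
  "rejected t \<longleftrightarrow> t < length ys \<and> ys ! t \<in> Ystar \<and> B < c (ys ! t) + sum c (selected t)"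

lemma selected_if_not_rejected:
  "t < length ys \<Longrightarrow> ys ! t \<in> Ystar \<Longrightarrow> \<not> rejected t \<Longrightarrow> ys ! t \<in> selected (Suc t)"
  by (simp add: rejected_def selected_Suc)

lemma candidates_before_rejection:
  assumes "\<forall>s<t. \<not> rejected s"
  shows "Ystar - selected t \<subseteq> M - set (take t ys)"
proof
  fix y assume y: "y \<in> Ystar - selected t"
  have "y \<notin> set (take t ys)"
  proof
    assume "y \<in> set (take t ys)"
    then obtain s where s: "s < t" "s < length ys" "ys ! s = y"
      by (auto simp: in_set_conv_nth)
    then have "y \<in> selected (Suc s)"
      using assms y selected_if_not_rejected by blast
    moreover have "selected (Suc s) \<subseteq> selected t"
      using s(1) by (intro selected_mono) simp
    ultimately show False using y by blast
  qed
  then show "y \<in> M - set (take t ys)" using y opt_subset by blast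
qed

lemma gap_invariant_before_rejection:
  assumes B: "0 < B" and "t \<le> length ys" and "\<forall>s<t. \<not> rejected s"
  shows "gap_invariant (selected t)"
  using assms(2,3)
proof (induction t)
  case 0
  show ?case by (simp add: gap_invariant_def selected_0 f_empty)
next
  case (Suc t)
  then have t: "t < length ys" and first: "\<forall>s<t. \<not> rejected s" by auto
  have "gap_invariant (selected t)" using Suc.IH t first by simp
  then show ?case
    using gap_invariant_step[OF t candidates_before_rejection[OF first] B] selected_Suc[OF t]
    by auto
qed

lemma opt_subset_added:
  assumes "\<forall>t. \<not> rejected t"
  shows "Ystar \<subseteq> set added"
proof
  fix y assume "y \<in> Ystar"
  moreover obtain t where "t < length ys" "ys ! t = y"
    using \<open>y \<in> Ystar\<close> opt_subset set_ys by (metis in_set_conv_nth subsetD)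
  ultimately have "y \<in> selected (Suc t)"
    using selected_if_not_rejected assms by blast
  then show "y \<in> set added" using selected_subset_added by blast
qed

lemma value_at_first_rejection:
  assumes rej: "rejected t" and first: "\<forall>s<t. \<not> rejected s"
  shows "(1 - exp (- \<gamma>1)) * f Ystar - 2 * ((B + cmax) / cmin) * \<epsilon>
    \<le> f (insert (ys ! t) (selected t))"
proof -
  define G K where "G = insert (ys ! t) (selected t)" and "K = (B + cmax) / cmin"
  from rej have t: "t < length ys" and u: "ys ! t \<in> Ystar"
    and over: "B < c (ys ! t) + sum c (selected t)"
    unfolding rejected_def by auto
  have uM: "ys ! t \<in> M" using u opt_subset by blast
  have "c (ys ! t) \<le> sum c Ystar"
    using u finite_subset[OF opt_subset finite_M] opt_subset cost_pos
    by (intro member_le_sum) (auto intro: less_imp_le)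
  then have B: "0 < B" using cost_pos[OF uM] opt_cost by linarith
  have inv: "gap_invariant G"
    unfolding G_def using gap_invariant_step[OF t candidates_before_rejection[OF first] B]
      gap_invariant_before_rejection[OF B _ first] t by simp
  have GM: "G \<subseteq> M" using uM selected_subset unfolding G_def by blast
  have cost_G: "sum c G = c (ys ! t) + sum c (selected t)"
    using nth_notin_selected[OF t] finite_subset[OF selected_subset finite_M] unfolding G_def by simp
  then have "B < sum c G" "sum c G \<le> B + cmax"
    using over sum_selected_le[of t] cmax_ge[OF uM] by linarith+
  then have "1 \<le> sum c G / B" using B by simp
  then have "exp (- \<gamma>1 * sum c G / B) \<le> exp (- \<gamma>1)"
    using gamma1_nonneg mult_left_mono[of 1 "sum c G / B" \<gamma>1] by simp
  then have "exp (- \<gamma>1 * sum c G / B) * f Ystar \<le> exp (- \<gamma>1) * f Ystar"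
    using f_nonneg[OF opt_subset] by (intro mult_right_mono)
  moreover have "sum c G / cmin \<le> K"
    using \<open>sum c G \<le> B + cmax\<close> cmin_pos unfolding K_def by (intro divide_right_mono) auto
  moreover have "real (card G) \<le> K"
    using card_le_cost_div_cmin[OF GM] \<open>sum c G / cmin \<le> K\<close> by linarith
  ultimately have "\<epsilon> * (card G + sum c G / cmin) \<le> \<epsilon> * (2 * K)"
    and "exp (- \<gamma>1 * sum c G / B) * f Ystar \<le> exp (- \<gamma>1) * f Ystar"
    using eps_nonneg by (auto intro: mult_left_mono)
  then show ?thesis
    using inv unfolding gap_invariant_def G_def[symmetric] K_def[symmetric] by (simp add: algebra_simps)
qed

lemma value_without_rejection:
  assumes "\<forall>t. \<not> rejected t"
  shows "f Ystar - \<epsilon> \<le> f Yg"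
proof -
  have "f Ystar \<le> f (set added)"
    using opt_subset_added[OF assms] added_subset by (intro mono)
  then show ?thesis using output_value(2) by linarith
qed

lemma value_after_first_rejection:
  assumes rej: "rejected t" and first: "\<forall>s<t. \<not> rejected s"
  shows "min \<gamma>2 1 / 2 * ((1 - exp (- \<gamma>1)) * f Ystar - 2 * ((B + cmax) / cmin) * \<epsilon>) - \<epsilon>
    \<le> f Yg"
proof -
  define S G where "S = selected t" and "G = insert (ys ! t) S"
  from rej have t: "t < length ys" and over: "B < c (ys ! t) + sum c S"
    unfolding rejected_def S_def by auto
  have uM: "ys ! t \<in> M - S"
    using t set_ys nth_notin_selected unfolding S_def by auto
  have "f S \<le> f G"
    using uM selected_subset unfolding G_def S_def by (intro mono) auto
  moreover have "f S \<le> f (set added)"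
    using selected_subset_added added_subset unfolding S_def by (intro mono)
  moreover have "\<gamma>2 * (f G - f S) \<le> f Y1"
    using gamma2_selected uM over unfolding G_def S_def by blast
  ultimately have "min \<gamma>2 1 * f G \<le> 2 * max (f Y1) (f (set added))"
    using gamma2_nonneg f_nonneg[OF Y1_subset] by (intro min_one_mult_le_twice_max) auto
  moreover have "min \<gamma>2 1 / 2 * ((1 - exp (- \<gamma>1)) * f Ystar - 2 * ((B + cmax) / cmin) * \<epsilon>)
      \<le> min \<gamma>2 1 / 2 * f G"
    using value_at_first_rejection[OF rej first] gamma2_nonneg unfolding G_def S_def
    by (intro mult_left_mono) auto
  moreover have "max (f Y1) (f (set added)) - \<epsilon> \<le> f Yg"
    using output_value by simp
  ultimately show ?thesis by linarith
qed

theorem alg2_guarantee: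
  "min \<gamma>2 1 / 2 * (1 - exp (- \<gamma>1)) * f Ystar - ((B + cmax) / cmin + 1) * \<epsilon> \<le> f Yg"
proof -
  define K m where "K = (B + cmax) / cmin" and "m = min \<gamma>2 1"
  have "cmin \<le> cmax"
    using M_nonempty cmin_le cmax_ge by (metis all_not_in_conv order_trans)
  then have K: "0 \<le> K * \<epsilon>"
    unfolding K_def using budget_nonneg cmin_pos eps_nonneg by simp
  have m: "0 \<le> m" "m \<le> 1" unfolding m_def using gamma2_nonneg by auto
  show ?thesis
  proof (cases "\<exists>t. rejected t")
    case False
    have "m * (1 - exp (- \<gamma>1)) \<le> 1"
      using m gamma1_nonneg by (intro mult_le_one) auto
    then have "m / 2 * (1 - exp (- \<gamma>1)) * f Ystar \<le> f Ystar"
      using m gamma1_nonneg f_nonneg[OF opt_subset] by (intro mult_left_le_one_le) auto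
    then show ?thesis
      using value_without_rejection False K
      unfolding m_def[symmetric] K_def[symmetric] distrib_right by auto
  next
    case True
    then obtain t where "rejected t" and "\<forall>s<t. \<not> rejected s"
      using exists_least_iff[of rejected] by blast
    then have "m / 2 * ((1 - exp (- \<gamma>1)) * f Ystar - 2 * K * \<epsilon>) - \<epsilon> \<le> f Yg"
      unfolding m_def K_def by (rule value_after_first_rejection)
    moreover have "m * (K * \<epsilon>) \<le> K * \<epsilon>"
      using m K by (intro mult_left_le_one_le)
    ultimately show ?thesis
      unfolding m_def[symmetric] K_def[symmetric] by (simp add: algebra_simps)
  qed
qed

end

theorem theorem4:
  fixes n t1 t2 :: nat
    and E :: "(nat \<times> nat) set" and a :: "nat \<Rightarrow> nat \<Rightarrow> real" and h :: real
    and s0 x0 r0 :: "nat \<Rightarrow> real"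
    and p :: "real \<times> real \<Rightarrow> real"
    and Nx Nr \<zeta> \<eta> :: "nat \<Rightarrow> nat"
    and c b :: "nat \<Rightarrow> nat \<Rightarrow> real" and B :: real
    and fh :: "meas set \<Rightarrow> real" and \<epsilon> :: real
    and Yg Y1 Ystar :: "meas set" and ys :: "meas list"
    and \<gamma>1 \<gamma>2 :: real
  defines "M \<equiv> ground_set n t1 t2 \<zeta> \<eta>"
    and "cost \<equiv> meas_cost c b"
    and "Fp \<equiv> prior_fisher p"
    and "H \<equiv> meas_H E a h s0 x0 r0 p Nx Nr"
    and "f \<equiv> f_Pa (prior_fisher p) (meas_H E a h s0 x0 r0 p Nx Nr)"
  assumes n: "n \<ge> 1"
    and graph: "E \<subseteq> {1..n} \<times> {1..n}"
    and weights: "\<forall>i j. 0 \<le> a i j"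
    and pdf: "\<forall>\<theta>. 0 \<le> p \<theta>" "integrable lborel p" "integral\<^sup>L lborel p = 1"
    and times: "1 \<le> t1" "t1 \<le> t2"
    and samples: "\<forall>i\<in>{1..n}. 1 \<le> Nx i \<and> 1 \<le> Nr i \<and> 1 \<le> \<zeta> i \<and> 1 \<le> \<eta> i"
    and costs: "\<forall>i\<in>{1..n}. \<forall>k\<in>{t1..t2}. 0 < c k i \<and> 0 < b k i"
    and budget: "0 \<le> B"
    and H_psd: "\<forall>y\<in>M. psd2 (H y)"
    and Fp_pd: "pd2 Fp"
    and fh0: "fh {} = 0"
    and eps: "0 \<le> \<epsilon>" "\<forall>Y \<subseteq> M. \<bar>fh Y - f Y\<bar> \<le> \<epsilon> / 2"
    and run: "alg2_output fh cost B M Yg Y1 ys"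
    and opt: "Ystar \<subseteq> M" "(\<Sum>y\<in>Ystar. cost y) \<le> B"
      "\<forall>Y \<subseteq> M. (\<Sum>y\<in>Y. cost y) \<le> B \<longrightarrow> f Y \<le> f Ystar"
    and g1: "is_gamma1 f M (greedy_added cost B ys) \<gamma>1"
    and g2: "is_gamma2 f cost B M Y1 (greedy_added cost B ys) \<gamma>2"
    and g_nonneg: "0 \<le> \<gamma>1" "0 \<le> \<gamma>2"
  shows "f Yg \<ge> min \<gamma>2 1 / 2 * (1 - exp (- \<gamma>1)) * f Ystar
            - ((B + Max (cost ` M)) / Min (cost ` M) + 1) * \<epsilon>"
proof -
  have "finite M"
    using run unfolding alg2_output_def greedy_run_def by (metis List.finite_set)
  interpret alg2_analysis f fh cost B \<epsilon> M Yg Y1 ys Ystar \<gamma>1 \<gamma>2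
  proof
    show "0 < cost y" if "y \<in> M" for y
      using that costs unfolding M_def ground_set_def cost_def meas_cost_def by auto
    show "f S \<le> f T" if "S \<subseteq> T" "T \<subseteq> M" for S T
      using that Fp_pd H_psd finite_subset[OF _ \<open>finite M\<close>] unfolding f_def Fp_def H_def
      by (intro f_Pa_mono) auto
  qed (use budget eps run opt g1 g2 g_nonneg f_def in \<open>auto simp: is_gamma1_def is_gamma2_def\<close>)
  show ?thesis
    using alg2_guarantee by simp
qed

end
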